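(* Let $\varepsilon>0$ and let $G:\mathbb{R}\to\mathbb{R}$ satisfy: $G\ge 0$ and $\mathrm{supp}(G)=\mathbb{R}$; $G\in W^{1,1}(\mathbb{R})\cap L^\infty(\mathbb{R})\cap C^2(\mathbb{R})$; $G(x)=g(|x|)$ with $g'(r)<0$ for all $r>0$, $g''(0)<0$, $\lim_{r\to+\infty}g(r)=0$; and $\int G=1$. Let $\rho_\infty\in L^2(\mathbb{R})\cap\mathcal{P}$ be a minimizer of $$E[\rho]=\frac{\varepsilon}{2}\int\rho^2(x)\,dx-\frac12\iint G(x-y)\rho(x)\rho(y)\,dy\,dx$$ over $L^2(\mathbb{R})\cap\mathcal{P}$ under the constraint that the center of mass $\int x\rho(x)\,dx$ is zero. Then $\rho_\infty$ is symmetric (even) and monotonically decreasing on $x>0$.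
   Context: $\mathcal{P}=\{\rho\in L^1(\mathbb{R}):\rho\ge0,\ \int_{\mathbb{R}}\rho\,dx=1\}$. *)

theory Defs
  imports "HOL-Analysis.Analysis"
begin

definition prob_density :: "(real \<Rightarrow> real) \<Rightarrow> bool" where
  "prob_density \<rho> \<longleftrightarrow> integrable lborel \<rho> \<and> (\<forall>x. 0 \<le> \<rho> x) \<and> (LINT x|lborel. \<rho> x) = 1"

definition L2 :: "(real \<Rightarrow> real) \<Rightarrow> bool" where
  "L2 \<rho> \<longleftrightarrow> \<rho> \<in> borel_measurable lborel \<and> integrable lborel (\<lambda>x. (\<rho> x)\<^sup>2)"

definition admissible :: "(real \<Rightarrow> real) \<Rightarrow> bool" where
  "admissible \<rho> \<longleftrightarrow> L2 \<rho> \<and> prob_density \<rho> \<and>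
     integrable lborel (\<lambda>x. x * \<rho> x) \<and> (LINT x|lborel. x * \<rho> x) = 0"

definition energy :: "real \<Rightarrow> (real \<Rightarrow> real) \<Rightarrow> (real \<Rightarrow> real) \<Rightarrow> real" where
  "energy \<epsilon> G \<rho> = \<epsilon> / 2 * (LINT x|lborel. (\<rho> x)\<^sup>2)
     - 1/2 * (LINT x|lborel. (LINT y|lborel. G (x - y) * \<rho> x * \<rho> y))"

end

theory Submission
  imports Defs
begin

text \<open>
  The proof is by two-point rearrangement. For a reflection \<open>x \<mapsto> 2a - x\<close>, the polarization
  of \<open>\<rho>\<close> puts the larger of \<open>\<rho> x\<close>, \<open>\<rho> (2a - x)\<close> on the side \<open>x > a\<close>. It preserves mass and
  \<open>L\<^sup>2\<close> norm and, because \<open>G\<close> is even and strictly decreasing in \<open>|x|\<close>, does not decrease the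
  interaction \<open>\<integral>\<integral> G (x - y) \<rho> x \<rho> y\<close>; it increases it strictly unless \<open>\<rho>\<close> and its reflection are
  ordered a.e. on \<open>x > a\<close>. Recentring does not change the energy, so minimality forces this
  ordering for every \<open>a\<close>. The centre of mass decides its direction, since
  \<open>\<integral>\<^bsub>x>a\<^esub> (x - a) (\<rho> x - \<rho> (2a - x)) = -a\<close>: for \<open>a > 0\<close> the reflection dominates, and for \<open>a = 0\<close>
  \<open>\<rho>\<close> is even. Finally, when \<open>\<rho> x \<le> \<rho> (2a - x)\<close> a.e. on \<open>x > a\<close> for all \<open>a > 0\<close>, every
  superlevel set of \<open>\<rho>\<close> in \<open>(0, \<infinity>)\<close> is an interval \<open>(0, r)\<close> up to a null set, which yields a
  decreasing representative.
\<close>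

section \<open>Reflections of the real line\<close>

lemma integrable_reflect:
  fixes f :: "real \<Rightarrow> real"
  assumes "integrable lborel f"
  shows "integrable lborel (\<lambda>x. f (2*a - x))"
  using lborel_integrable_real_affine[OF assms, of "-1" "2*a"] by simp

lemma integral_reflect:
  fixes f :: "real \<Rightarrow> real"
  shows "(LINT x|lborel. f (2*a - x)) = (LINT x|lborel. f x)"
  using lborel_integral_real_affine[of "-1" f "2*a"] by simp

lemma integral_shift:
  fixes f :: "real \<Rightarrow> real"
  shows "(LINT x|lborel. f (x + m)) = (LINT x|lborel. f x)"
  using lborel_integral_real_affine[of 1 f m] by (simp add: add.commute)

lemma integrable_shift_iff:
  fixes f :: "real \<Rightarrow> real"
  shows "integrable lborel (\<lambda>x. f (x + m)) \<longleftrightarrow> integrable lborel f"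
  using lborel_integrable_real_affine_iff[of 1 f m] by (simp add: add.commute)

lemma integrable_reflection_fold:
  fixes f :: "real \<Rightarrow> real"
  assumes "integrable lborel f"
  shows "integrable lborel (\<lambda>x. indicator {a<..} x * (f x + f (2*a - x)))"
  using integrable_real_mult_indicator[OF _ Bochner_Integration.integrable_add[OF assms integrable_reflect[OF assms]],
      of "{a<..}"]
  by (simp add: mult.commute)

lemma integral_reflection_fold:
  fixes f :: "real \<Rightarrow> real"
  assumes f: "integrable lborel f"
  shows "(LINT x|lborel. f x) = (LINT x|lborel. indicator {a<..} x * (f x + f (2*a - x)))"
proof -
  have [measurable]: "f \<in> borel_measurable borel"
    using borel_measurable_integrable[OF f] by simp
  have f_gt: "integrable lborel (\<lambda>x. indicator {a<..} x * f x)"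
    and f_lt: "integrable lborel (\<lambda>x. indicator {..<a} x * f x)"
    using integrable_real_mult_indicator[OF _ f] by (simp_all add: mult.commute)
  have f_refl_gt: "integrable lborel (\<lambda>x. indicator {a<..} x * f (2*a - x))"
    using integrable_real_mult_indicator[OF _ integrable_reflect[OF f]] by (simp add: mult.commute)
  have "(LINT x|lborel. f x) = (LINT x|lborel. indicator {a<..} x * f x + indicator {..<a} x * f x)"
    by (intro integral_cong_AE)
       (auto simp: indicator_def intro!: eventually_mono[OF AE_lborel_singleton[of a]])
  also have "\<dots> = (LINT x|lborel. indicator {a<..} x * f x) + (LINT x|lborel. indicator {..<a} x * f x)"
    using f_gt f_lt by (rule Bochner_Integration.integral_add)
  also have "(LINT x|lborel. indicator {..<a} x * f x) = (LINT x|lborel. indicator {a<..} x * f (2*a - x))"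
    using integral_reflect[of "\<lambda>x. indicator {..<a} x * f x" a]
    by (simp add: indicator_def)
  also have "(LINT x|lborel. indicator {a<..} x * f x) + \<dots>
      = (LINT x|lborel. indicator {a<..} x * (f x + f (2*a - x)))"
    using Bochner_Integration.integral_add[OF f_gt f_refl_gt] by (simp add: distrib_left)
  finally show ?thesis .
qed

lemma AE_lborel_reflect:
  fixes P :: "real \<Rightarrow> bool"
  assumes "AE x in lborel. P x"
  shows "AE x in lborel. P (- x)"
proof -
  obtain N where N: "{x. \<not> P x} \<subseteq> N" "N \<in> null_sets lborel"
    using assms by (auto simp: eventually_ae_filter)
  have "AE x in lborel. x \<notin> N"
    using N(2) by (rule AE_not_in)
  then have "AE x in lborel. 0 + (-1) * x \<notin> N"
    using N(2) by (intro AE_borel_affine) auto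
  then show ?thesis
    by eventually_elim (use N(1) in auto)
qed

section \<open>Polarization\<close>

definition polarization :: "real \<Rightarrow> (real \<Rightarrow> real) \<Rightarrow> real \<Rightarrow> real" where
  "polarization a r x =
     (if a < x then max (r x) (r (2*a - x)) else if x < a then min (r x) (r (2*a - x)) else r x)"

lemma polarization_gt: "a < x \<Longrightarrow> polarization a r x = max (r x) (r (2*a - x))"
  by (simp add: polarization_def)

lemma polarization_reflect_gt: "a < x \<Longrightarrow> polarization a r (2*a - x) = min (r x) (r (2*a - x))"
  by (simp add: polarization_def min.commute)

lemma polarization_cases: "polarization a r x = r x \<or> polarization a r x = r (2*a - x)"
  by (auto simp: polarization_def max_def min_def)

lemma borel_measurable_polarization[measurable]:
  assumes [measurable]: "r \<in> borel_measurable borel"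
  shows "polarization a r \<in> borel_measurable borel"
  unfolding polarization_def by measurable

lemma integrable_comp_polarization:
  fixes F r :: "real \<Rightarrow> real"
  assumes [measurable]: "F \<in> borel_measurable borel" "r \<in> borel_measurable borel"
    and Fr: "integrable lborel (\<lambda>x. F (r x))"
  shows "integrable lborel (\<lambda>x. F (polarization a r x))"
proof (rule Bochner_Integration.integrable_bound)
  show "integrable lborel (\<lambda>x. \<bar>F (r x)\<bar> + \<bar>F (r (2*a - x))\<bar>)"
    using Fr integrable_reflect[OF Fr] by (intro Bochner_Integration.integrable_add) auto
  have "norm (F (polarization a r x)) \<le> norm (\<bar>F (r x)\<bar> + \<bar>F (r (2*a - x))\<bar>)" for x
    using polarization_cases[of a r x] by auto
  then show "AE x in lborel. norm (F (polarization a r x)) \<le> norm (\<bar>F (r x)\<bar> + \<bar>F (r (2*a - x))\<bar>)"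
    by simp
qed measurable

lemma integral_comp_polarization:
  fixes F r :: "real \<Rightarrow> real"
  assumes [measurable]: "F \<in> borel_measurable borel" "r \<in> borel_measurable borel"
    and Fr: "integrable lborel (\<lambda>x. F (r x))"
  shows "(LINT x|lborel. F (polarization a r x)) = (LINT x|lborel. F (r x))"
proof -
  have "(LINT x|lborel. F (polarization a r x))
      = (LINT x|lborel. indicator {a<..} x * (F (polarization a r x) + F (polarization a r (2*a - x))))"
    using integrable_comp_polarization[OF assms] by (rule integral_reflection_fold)
  also have "\<dots> = (LINT x|lborel. indicator {a<..} x * (F (r x) + F (r (2*a - x))))"
    by (intro Bochner_Integration.integral_cong)
       (auto simp: indicator_def polarization_gt polarization_reflect_gt max_def min_def)
  also have "\<dots> = (LINT x|lborel. F (r x))"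
    using Fr by (rule integral_reflection_fold[symmetric])
  finally show ?thesis .
qed

lemma max_mult_max_add_min_mult_min:
  fixes u u' v v' :: real
  shows "max u u' * max v v' + min u u' * min v v' - u * v - u' * v' = max 0 (- ((u - u') * (v - v')))"
proof -
  have "(u - u') * (v - v') = u * v + u' * v' - u * v' - u' * v"
    by (simp add: algebra_simps)
  moreover have "0 \<le> (u - u') * (v - v') \<longleftrightarrow> (u \<le> u' \<longleftrightarrow> v \<le> v') \<or> u = u' \<or> v = v'"
    by (auto simp: zero_le_mult_iff)
  ultimately show ?thesis
    by (cases "u \<le> u'"; cases "v \<le> v'") (auto simp: max_def min_def)
qed

section \<open>Polarization and the interaction energy\<close>

definition interaction :: "(real \<Rightarrow> real) \<Rightarrow> (real \<Rightarrow> real) \<Rightarrow> real" where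
  "interaction G r = (LINT x|lborel. (LINT y|lborel. G (x - y) * r x * r y))"

lemma energy_eq_interaction:
  "energy \<epsilon> G \<rho> = \<epsilon> / 2 * (LINT x|lborel. (\<rho> x)\<^sup>2) - interaction G \<rho> / 2"
  by (simp add: energy_def interaction_def)

lemma integrable_interaction_integrand:
  fixes G r :: "real \<Rightarrow> real"
  assumes [measurable]: "G \<in> borel_measurable borel" "r \<in> borel_measurable borel"
    and G_bound: "\<forall>x. \<bar>G x\<bar> \<le> M" and r: "integrable lborel r"
  shows "integrable lborel (\<lambda>y. G (x - y) * r x * r y)"
proof (rule Bochner_Integration.integrable_bound)
  show "integrable lborel (\<lambda>y. M * \<bar>r x\<bar> * \<bar>r y\<bar>)"
    using r by simp
  have "0 \<le> M"
    using G_bound by (meson abs_ge_zero order_trans)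
  then show "AE y in lborel. norm (G (x - y) * r x * r y) \<le> norm (M * \<bar>r x\<bar> * \<bar>r y\<bar>)"
    using G_bound by (intro AE_I2) (auto simp: abs_mult intro!: mult_right_mono)
qed measurable

lemma integrable_interaction_inner_integral:
  fixes G r :: "real \<Rightarrow> real"
  assumes [measurable]: "G \<in> borel_measurable borel" "r \<in> borel_measurable borel"
    and G_bound: "\<forall>x. \<bar>G x\<bar> \<le> M" and r: "integrable lborel r"
  shows "integrable lborel (\<lambda>x. LINT y|lborel. G (x - y) * r x * r y)"
proof (rule Bochner_Integration.integrable_bound)
  show "integrable lborel (\<lambda>x. M * (LINT y|lborel. \<bar>r y\<bar>) * \<bar>r x\<bar>)"
    using r by simp
  have M: "0 \<le> M"
    using G_bound by (meson abs_ge_zero order_trans)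
  have "norm (LINT y|lborel. G (x - y) * r x * r y) \<le> M * (LINT y|lborel. \<bar>r y\<bar>) * \<bar>r x\<bar>" for x
  proof -
    have "norm (LINT y|lborel. G (x - y) * r x * r y) \<le> (LINT y|lborel. norm (G (x - y) * r x * r y))"
      by (rule integral_norm_bound)
    also have "\<dots> \<le> (LINT y|lborel. M * \<bar>r x\<bar> * \<bar>r y\<bar>)"
    proof (rule integral_mono)
      show "integrable lborel (\<lambda>y. norm (G (x - y) * r x * r y))"
        using integrable_interaction_integrand[OF assms] by (rule integrable_norm)
      show "integrable lborel (\<lambda>y. M * \<bar>r x\<bar> * \<bar>r y\<bar>)"
        using r by simp
      show "norm (G (x - y) * r x * r y) \<le> M * \<bar>r x\<bar> * \<bar>r y\<bar>" for y
        using G_bound by (auto simp: abs_mult intro!: mult_right_mono)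
    qed
    finally show ?thesis
      by (simp add: mult_ac)
  qed
  then show "AE x in lborel. norm (LINT y|lborel. G (x - y) * r x * r y)
      \<le> norm (M * (LINT y|lborel. \<bar>r y\<bar>) * \<bar>r x\<bar>)"
    using M by (intro AE_I2) (simp add: integral_nonneg_AE)
qed measurable

text \<open>The integrand of \<^const>\<open>interaction\<close> summed over the reflections of \<open>x\<close> and \<open>y\<close>
  across \<open>a\<close>, simplified using that \<open>G\<close> is even.\<close>

definition folded_kernel :: "(real \<Rightarrow> real) \<Rightarrow> (real \<Rightarrow> real) \<Rightarrow> real \<Rightarrow> real \<Rightarrow> real \<Rightarrow> real" where
  "folded_kernel G r a x y = G (x - y) * (r x * r y + r (2*a - x) * r (2*a - y))
     + G (x + y - 2*a) * (r x * r (2*a - y) + r (2*a - x) * r y)"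

lemma interaction_fold:
  fixes G r :: "real \<Rightarrow> real"
  assumes [measurable]: "G \<in> borel_measurable borel" "r \<in> borel_measurable borel"
    and G_bound: "\<forall>x. \<bar>G x\<bar> \<le> M" and r: "integrable lborel r"
    and G_even: "\<forall>x. G (- x) = G x"
  shows "integrable lborel (\<lambda>y. indicator {a<..} y * folded_kernel G r a x y)"
    and "integrable lborel (\<lambda>x. indicator {a<..} x * (LINT y|lborel. indicator {a<..} y * folded_kernel G r a x y))"
    and "interaction G r = (LINT x|lborel. indicator {a<..} x * (LINT y|lborel. indicator {a<..} y * folded_kernel G r a x y))"
proof -
  define \<Phi> where "\<Phi> x = (LINT y|lborel. G (x - y) * r x * r y)" for x
  define \<phi> where "\<phi> x y = indicator {a<..} y * (G (x - y) * r x * r y + G (x - (2*a - y)) * r x * r (2*a - y))" for x y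
  have inner: "integrable lborel (\<lambda>y. G (x - y) * r x * r y)" for x
    using assms(1-4) by (rule integrable_interaction_integrand)
  have outer: "integrable lborel \<Phi>"
    unfolding \<Phi>_def using assms(1-4) by (rule integrable_interaction_inner_integral)
  have \<phi>: "integrable lborel (\<phi> x)" "\<Phi> x = (LINT y|lborel. \<phi> x y)" for x
    unfolding \<Phi>_def \<phi>_def
    using integrable_reflection_fold[OF inner] integral_reflection_fold[OF inner] by simp_all
  have G_sym: "G ((2*a - x) - y) = G (x + y - 2*a)" "G ((2*a - x) - (2*a - y)) = G (x - y)" for x y
    using G_even[rule_format, of "x + y - 2*a"] G_even[rule_format, of "x - y"]
    by (simp_all add: algebra_simps)
  have kernel: "indicator {a<..} y * folded_kernel G r a x y = \<phi> x y + \<phi> (2*a - x) y" for x y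
    unfolding folded_kernel_def \<phi>_def G_sym by (simp add: algebra_simps)
  show "integrable lborel (\<lambda>y. indicator {a<..} y * folded_kernel G r a x y)" for x
    unfolding kernel using \<phi> by (intro Bochner_Integration.integrable_add)
  have sum: "\<Phi> x + \<Phi> (2*a - x) = (LINT y|lborel. indicator {a<..} y * folded_kernel G r a x y)" for x
    unfolding kernel \<phi>(2) by (rule Bochner_Integration.integral_add[symmetric]) (use \<phi> in simp_all)
  show "integrable lborel (\<lambda>x. indicator {a<..} x * (LINT y|lborel. indicator {a<..} y * folded_kernel G r a x y))"
    using integrable_reflection_fold[OF outer, of a] unfolding sum .
  have "(LINT x|lborel. \<Phi> x) = (LINT x|lborel. indicator {a<..} x * (LINT y|lborel. indicator {a<..} y * folded_kernel G r a x y))"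
    using integral_reflection_fold[OF outer, of a] unfolding sum .
  then show "interaction G r = (LINT x|lborel. indicator {a<..} x * (LINT y|lborel. indicator {a<..} y * folded_kernel G r a x y))"
    by (simp add: interaction_def \<Phi>_def)
qed

lemma folded_kernel_polarization_diff:
  assumes "a < x" "a < y"
  shows "folded_kernel G (polarization a r) a x y - folded_kernel G r a x y
    = (G (x - y) - G (x + y - 2*a)) * max 0 (- ((r x - r (2*a - x)) * (r y - r (2*a - y))))"
proof -
  define u u' v v' where "u = r x" "u' = r (2*a - x)" "v = r y" "v' = r (2*a - y)"
  have cross: "max u u' * min v v' + min u u' * max v v'
      = (u + u') * (v + v') - (max u u' * max v v' + min u u' * min v v')"
    by (cases "u \<le> u'"; cases "v \<le> v'") (simp_all add: max_def min_def algebra_simps)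
  show ?thesis
    using max_mult_max_add_min_mult_min[of u u' v v']
    unfolding folded_kernel_def polarization_gt[OF assms(1)] polarization_gt[OF assms(2)]
      polarization_reflect_gt[OF assms(1)] polarization_reflect_gt[OF assms(2)] u_u'_v_v'_def[symmetric] cross
    by (simp add: algebra_simps)
qed

definition polarization_gain :: "(real \<Rightarrow> real) \<Rightarrow> (real \<Rightarrow> real) \<Rightarrow> real \<Rightarrow> real \<Rightarrow> real \<Rightarrow> real" where
  "polarization_gain G r a x y = indicator {a<..} x * indicator {a<..} y * (G (x - y) - G (x + y - 2*a))
     * max 0 (- ((r x - r (2*a - x)) * (r y - r (2*a - y))))"

lemma interaction_polarization_diff:
  fixes G r :: "real \<Rightarrow> real"
  assumes [measurable]: "G \<in> borel_measurable borel" "r \<in> borel_measurable borel"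
    and G_bound: "\<forall>x. \<bar>G x\<bar> \<le> M" and r: "integrable lborel r"
    and G_even: "\<forall>x. G (- x) = G x"
  shows "integrable lborel (polarization_gain G r a x)"
    and "integrable lborel (\<lambda>x. LINT y|lborel. polarization_gain G r a x y)"
    and "interaction G (polarization a r) - interaction G r
      = (LINT x|lborel. LINT y|lborel. polarization_gain G r a x y)"
proof -
  have "integrable lborel (polarization a r)"
    using integrable_comp_polarization[of "\<lambda>x. x" r a] r by simp
  note Fs = interaction_fold[OF assms(1) borel_measurable_polarization[OF assms(2)] G_bound this G_even, of a]
  note Fr = interaction_fold[OF assms, of a]
  define K where "K s x y = indicator {a<..} y * folded_kernel G s a x y" for s x y
  have gain: "polarization_gain G r a x y = indicator {a<..} x * (K (polarization a r) x y - K r x y)" for x y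
    by (cases "a < x"; cases "a < y")
       (simp_all add: K_def polarization_gain_def folded_kernel_polarization_diff)
  show "integrable lborel (polarization_gain G r a x)" for x
    unfolding gain[abs_def] K_def using Fs(1) Fr(1)
    by (intro integrable_mult_right Bochner_Integration.integrable_diff)
  have outer: "(LINT y|lborel. polarization_gain G r a x y)
      = indicator {a<..} x * (LINT y|lborel. K (polarization a r) x y) - indicator {a<..} x * (LINT y|lborel. K r x y)" for x
    unfolding gain K_def integral_mult_right_zero Bochner_Integration.integral_diff[OF Fs(1) Fr(1)]
    by (simp add: right_diff_distrib)
  show "integrable lborel (\<lambda>x. LINT y|lborel. polarization_gain G r a x y)"
    unfolding outer K_def using Fs(2) Fr(2) by (rule Bochner_Integration.integrable_diff)
  show "interaction G (polarization a r) - interaction G r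
      = (LINT x|lborel. LINT y|lborel. polarization_gain G r a x y)"
    unfolding outer K_def Fs(3) Fr(3) using Fs(2) Fr(2) by (rule Bochner_Integration.integral_diff[symmetric])
qed

lemma radial_less_if_abs_less:
  fixes G g g' :: "real \<Rightarrow> real"
  assumes G_radial: "\<forall>x. G x = g \<bar>x\<bar>"
    and g_deriv: "\<forall>r\<ge>0. (g has_real_derivative g' r) (at r within {0..})"
    and g'_neg: "\<forall>r>0. g' r < 0"
    and st: "\<bar>s\<bar> < \<bar>t\<bar>"
  shows "G t < G s"
proof -
  have "continuous (at r within {0..}) g" if "r \<in> {0..}" for r
    using g_deriv that by (auto intro: DERIV_continuous)
  then have "continuous_on {0..} g"
    by (simp add: continuous_on_eq_continuous_within)
  have "g \<bar>t\<bar> < g \<bar>s\<bar>"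
  proof (rule DERIV_neg_imp_decreasing_open[OF st])
    fix r assume "\<bar>s\<bar> < r" "r < \<bar>t\<bar>"
    then have r: "0 < r"
      by linarith
    then have "at r within {0..} = at r"
      by (intro at_within_interior) simp
    then have "(g has_real_derivative g' r) (at r)"
      using g_deriv r by (metis less_imp_le)
    with r g'_neg show "\<exists>y. (g has_real_derivative y) (at r) \<and> y < 0"
      by blast
  next
    show "continuous_on {\<bar>s\<bar>..\<bar>t\<bar>} g"
      using \<open>continuous_on {0..} g\<close> by (rule continuous_on_subset) auto
  qed
  then show ?thesis
    using G_radial by simp
qed

lemma reflected_kernel_less:
  fixes G :: "real \<Rightarrow> real"
  assumes "\<forall>s t. \<bar>s\<bar> < \<bar>t\<bar> \<longrightarrow> G t < G s" and "a < x" "a < y"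
  shows "G (x + y - 2*a) < G (x - y)"
  using assms by (simp add: abs_if)

lemma polarization_gain_nonneg:
  fixes G r :: "real \<Rightarrow> real"
  assumes "\<forall>s t. \<bar>s\<bar> < \<bar>t\<bar> \<longrightarrow> G t < G s"
  shows "0 \<le> polarization_gain G r a x y"
  using reflected_kernel_less[OF assms, of a x y]
  by (cases "a < x"; cases "a < y") (simp_all add: polarization_gain_def)

lemma polarization_gain_pos:
  fixes G r :: "real \<Rightarrow> real"
  assumes "\<forall>s t. \<bar>s\<bar> < \<bar>t\<bar> \<longrightarrow> G t < G s"
    and "a < x" "a < y" "(r x - r (2*a - x)) * (r y - r (2*a - y)) < 0"
  shows "0 < polarization_gain G r a x y"
  using reflected_kernel_less[OF assms(1-3)] assms(2-4)
  by (simp add: polarization_gain_def mult_pos_neg)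

lemma AE_polarization_gain_eq_0_if_interaction_le:
  fixes G r :: "real \<Rightarrow> real"
  assumes [measurable]: "G \<in> borel_measurable borel" "r \<in> borel_measurable borel"
    and G_bound: "\<forall>x. \<bar>G x\<bar> \<le> M" and r: "integrable lborel r"
    and G_even: "\<forall>x. G (- x) = G x"
    and G_decreasing: "\<forall>s t. \<bar>s\<bar> < \<bar>t\<bar> \<longrightarrow> G t < G s"
    and le: "interaction G (polarization a r) \<le> interaction G r"
  shows "AE x in lborel. AE y in lborel. polarization_gain G r a x y = 0"
proof -
  note gain = interaction_polarization_diff[OF assms(1-5), of a]
  have gain_nonneg: "0 \<le> polarization_gain G r a x y" for x y
    using G_decreasing by (rule polarization_gain_nonneg)
  have outer_nonneg: "0 \<le> (LINT y|lborel. polarization_gain G r a x y)" for x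
    using gain_nonneg by (simp add: integral_nonneg_AE)
  have "(LINT x|lborel. LINT y|lborel. polarization_gain G r a x y) \<le> 0"
    using gain(3) le by simp
  then have "(LINT x|lborel. LINT y|lborel. polarization_gain G r a x y) = 0"
    using outer_nonneg by (simp add: integral_nonneg_AE order_antisym)
  then have "AE x in lborel. (LINT y|lborel. polarization_gain G r a x y) = 0"
    using integral_nonneg_eq_0_iff_AE[OF gain(2)] outer_nonneg by simp
  then show ?thesis
    using integral_nonneg_eq_0_iff_AE[OF gain(1)] gain_nonneg by (auto elim!: eventually_mono)
qed

lemma polarization_comparable_if_interaction_le:
  fixes G r :: "real \<Rightarrow> real"
  assumes [measurable]: "G \<in> borel_measurable borel" "r \<in> borel_measurable borel"
    and G_bound: "\<forall>x. \<bar>G x\<bar> \<le> M" and r: "integrable lborel r"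
    and G_even: "\<forall>x. G (- x) = G x"
    and G_decreasing: "\<forall>s t. \<bar>s\<bar> < \<bar>t\<bar> \<longrightarrow> G t < G s"
    and le: "interaction G (polarization a r) \<le> interaction G r"
  shows "(AE x in lborel. a < x \<longrightarrow> r (2*a - x) \<le> r x) \<or> (AE x in lborel. a < x \<longrightarrow> r x \<le> r (2*a - x))"
proof (cases "\<exists>x. a < x \<and> r (2*a - x) < r x \<and> (AE y in lborel. polarization_gain G r a x y = 0)")
  case True
  then obtain x where x: "a < x" "r (2*a - x) < r x" "AE y in lborel. polarization_gain G r a x y = 0"
    by blast
  from x(3) have "AE y in lborel. a < y \<longrightarrow> r (2*a - y) \<le> r y"
  proof eventually_elim
    case (elim y)
    show ?case
    proof
      assume "a < y"
      with elim polarization_gain_pos[OF G_decreasing x(1) \<open>a < y\<close>, where r = r]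
      have "\<not> (r x - r (2*a - x)) * (r y - r (2*a - y)) < 0"
        by auto
      with x(2) show "r (2*a - y) \<le> r y"
        by (auto simp: mult_less_0_iff)
    qed
  qed
  then show ?thesis ..
next
  case False
  from AE_polarization_gain_eq_0_if_interaction_le[OF assms]
  have "AE x in lborel. a < x \<longrightarrow> r x \<le> r (2*a - x)"
    by eventually_elim (use False in \<open>meson not_less\<close>)
  then show ?thesis ..
qed

section \<open>Minimizers and reflections\<close>

lemma interaction_shift:
  fixes G r :: "real \<Rightarrow> real"
  shows "interaction G (\<lambda>x. r (x + m)) = interaction G r"
proof -
  have "(LINT y|lborel. G (x - y) * r (x + m) * r (y + m)) = (LINT y|lborel. G ((x + m) - y) * r (x + m) * r y)" for x
    using integral_shift[of "\<lambda>y. G ((x + m) - y) * r (x + m) * r y" m] by simp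
  then have "interaction G (\<lambda>x. r (x + m)) = (LINT x|lborel. (LINT y|lborel. G ((x + m) - y) * r (x + m) * r y))"
    by (simp add: interaction_def)
  also have "\<dots> = interaction G r"
    unfolding interaction_def by (rule integral_shift)
  finally show ?thesis .
qed

lemma energy_shift: "energy \<epsilon> G (\<lambda>x. \<rho> (x + m)) = energy \<epsilon> G \<rho>"
  unfolding energy_eq_interaction interaction_shift
  using integral_shift[of "\<lambda>x. (\<rho> x)\<^sup>2" m] by simp

lemma admissible_recentre:
  fixes \<sigma> :: "real \<Rightarrow> real"
  assumes "L2 \<sigma>" "prob_density \<sigma>" and moment: "integrable lborel (\<lambda>x. x * \<sigma> x)"
  defines "m \<equiv> LINT x|lborel. x * \<sigma> x"
  shows "admissible (\<lambda>x. \<sigma> (x + m))"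
proof -
  have [measurable]: "\<sigma> \<in> borel_measurable borel" and \<sigma>: "integrable lborel \<sigma>" "(LINT x|lborel. \<sigma> x) = 1"
    using assms by (simp_all add: L2_def prob_density_def)
  have "(\<lambda>x. x * \<sigma> (x + m)) = (\<lambda>x. (x + m) * \<sigma> (x + m) - m * \<sigma> (x + m))"
    by (auto simp: algebra_simps)
  moreover have "integrable lborel (\<lambda>x. (x + m) * \<sigma> (x + m))" "integrable lborel (\<lambda>x. m * \<sigma> (x + m))"
    using moment \<sigma>(1) integrable_shift_iff[of "\<lambda>x. x * \<sigma> x" m] integrable_shift_iff[of \<sigma> m] by simp_all
  ultimately have "integrable lborel (\<lambda>x. x * \<sigma> (x + m))"
    and "(LINT x|lborel. x * \<sigma> (x + m)) = (LINT x|lborel. (x + m) * \<sigma> (x + m)) - (LINT x|lborel. m * \<sigma> (x + m))"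
    by (simp_all add: Bochner_Integration.integral_diff)
  moreover have "(LINT x|lborel. (x + m) * \<sigma> (x + m)) = m" "(LINT x|lborel. m * \<sigma> (x + m)) = m"
    using integral_shift[of "\<lambda>x. x * \<sigma> x" m] integral_shift[of \<sigma> m] \<sigma>(2) by (simp_all add: m_def)
  ultimately show ?thesis
    using assms integrable_shift_iff[of \<sigma> m] integrable_shift_iff[of "\<lambda>x. (\<sigma> x)\<^sup>2" m]
      integral_shift[of \<sigma> m]
    by (simp add: admissible_def L2_def prob_density_def)
qed

lemma interaction_polarization_le_if_minimizer:
  assumes "admissible \<rho>"
    and min: "\<forall>\<sigma>. admissible \<sigma> \<longrightarrow> energy \<epsilon> G \<rho> \<le> energy \<epsilon> G \<sigma>"
  shows "interaction G (polarization a \<rho>) \<le> interaction G \<rho>"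
proof -
  let ?s = "polarization a \<rho>"
  have [measurable]: "\<rho> \<in> borel_measurable borel" and \<rho>: "\<forall>x. 0 \<le> \<rho> x" "integrable lborel \<rho>"
    "(LINT x|lborel. \<rho> x) = 1" "integrable lborel (\<lambda>x. (\<rho> x)\<^sup>2)" "integrable lborel (\<lambda>x. x * \<rho> x)"
    using assms by (simp_all add: admissible_def L2_def prob_density_def)
  have square: "(LINT x|lborel. (?s x)\<^sup>2) = (LINT x|lborel. (\<rho> x)\<^sup>2)"
    using integral_comp_polarization[of "\<lambda>x. x\<^sup>2" \<rho> a] \<rho>(4) by simp
  have "L2 ?s"
    using integrable_comp_polarization[of "\<lambda>x. x\<^sup>2" \<rho> a] \<rho>(4) by (simp add: L2_def)
  moreover have "0 \<le> ?s x" for x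
    using polarization_cases[of a \<rho> x] \<rho>(1) by auto
  then have "prob_density ?s"
    using integrable_comp_polarization[of "\<lambda>x. x" \<rho> a] integral_comp_polarization[of "\<lambda>x. x" \<rho> a] \<rho>
    by (simp add: prob_density_def)
  moreover have "integrable lborel (\<lambda>x. x * ?s x)"
  proof (rule Bochner_Integration.integrable_bound)
    have "integrable lborel (\<lambda>x. x * \<rho> (2*a - x))"
      using integrable_reflect[of "\<lambda>t. 2*a * \<rho> t - t * \<rho> t" a] \<rho>(2,5) by (simp add: algebra_simps)
    then show "integrable lborel (\<lambda>x. \<bar>x * \<rho> x\<bar> + \<bar>x * \<rho> (2*a - x)\<bar>)"
      using \<rho>(5) by (intro Bochner_Integration.integrable_add integrable_abs)
    have "norm (x * ?s x) \<le> norm (\<bar>x * \<rho> x\<bar> + \<bar>x * \<rho> (2*a - x)\<bar>)" for x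
      using polarization_cases[of a \<rho> x] by auto
    then show "AE x in lborel. norm (x * ?s x) \<le> norm (\<bar>x * \<rho> x\<bar> + \<bar>x * \<rho> (2*a - x)\<bar>)"
      by simp
  qed measurable
  ultimately have "admissible (\<lambda>x. ?s (x + (LINT x|lborel. x * ?s x)))"
    by (rule admissible_recentre)
  then have "energy \<epsilon> G \<rho> \<le> energy \<epsilon> G (\<lambda>x. ?s (x + (LINT x|lborel. x * ?s x)))"
    using min by blast
  then have "energy \<epsilon> G \<rho> \<le> energy \<epsilon> G ?s"
    by (simp only: energy_shift)
  then show ?thesis
    using square by (simp add: energy_eq_interaction)
qed

lemma centred_moment_fold:
  fixes \<rho> :: "real \<Rightarrow> real"
  assumes \<rho>: "integrable lborel \<rho>" and moment: "integrable lborel (\<lambda>x. x * \<rho> x)"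
  shows "integrable lborel (\<lambda>x. indicator {a<..} x * ((x - a) * (\<rho> x - \<rho> (2*a - x))))"
    and "(LINT x|lborel. indicator {a<..} x * ((x - a) * (\<rho> x - \<rho> (2*a - x))))
      = (LINT x|lborel. x * \<rho> x) - a * (LINT x|lborel. \<rho> x)"
proof -
  have f: "integrable lborel (\<lambda>x. x * \<rho> x - a * \<rho> x)"
    using \<rho> moment by (intro Bochner_Integration.integrable_diff) auto
  have fold: "indicator {a<..} x * ((x * \<rho> x - a * \<rho> x) + ((2*a - x) * \<rho> (2*a - x) - a * \<rho> (2*a - x)))
      = indicator {a<..} x * ((x - a) * (\<rho> x - \<rho> (2*a - x)))" for x
    by (simp add: algebra_simps)
  show "integrable lborel (\<lambda>x. indicator {a<..} x * ((x - a) * (\<rho> x - \<rho> (2*a - x))))"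
    using integrable_reflection_fold[OF f, of a] unfolding fold .
  show "(LINT x|lborel. indicator {a<..} x * ((x - a) * (\<rho> x - \<rho> (2*a - x))))
      = (LINT x|lborel. x * \<rho> x) - a * (LINT x|lborel. \<rho> x)"
    using integral_reflection_fold[OF f, of a] \<rho> moment unfolding fold
    by (simp add: Bochner_Integration.integral_diff)
qed

lemma reflection_le_if_centred:
  fixes \<rho> :: "real \<Rightarrow> real"
  assumes \<rho>: "integrable lborel \<rho>" "(LINT x|lborel. \<rho> x) = 1"
    and moment: "integrable lborel (\<lambda>x. x * \<rho> x)" "(LINT x|lborel. x * \<rho> x) = 0"
    and comparable: "(AE x in lborel. a < x \<longrightarrow> \<rho> (2*a - x) \<le> \<rho> x)
      \<or> (AE x in lborel. a < x \<longrightarrow> \<rho> x \<le> \<rho> (2*a - x))"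
    and "0 < a"
  shows "AE x in lborel. a < x \<longrightarrow> \<rho> x \<le> \<rho> (2*a - x)"
proof (rule ccontr)
  assume "\<not> ?thesis"
  with comparable have "AE x in lborel. a < x \<longrightarrow> \<rho> (2*a - x) \<le> \<rho> x"
    by blast
  then have "0 \<le> (LINT x|lborel. indicator {a<..} x * ((x - a) * (\<rho> x - \<rho> (2*a - x))))"
    by (intro integral_nonneg_AE) (auto elim!: eventually_mono simp: indicator_def)
  with centred_moment_fold(2)[OF \<rho>(1) moment(1), of a] \<rho>(2) moment(2) \<open>0 < a\<close> show False
    by simp
qed

lemma even_if_centred:
  fixes \<rho> :: "real \<Rightarrow> real"
  assumes \<rho>: "integrable lborel \<rho>" and moment: "integrable lborel (\<lambda>x. x * \<rho> x)" "(LINT x|lborel. x * \<rho> x) = 0"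
    and comparable: "(AE x in lborel. 0 < x \<longrightarrow> \<rho> (- x) \<le> \<rho> x)
      \<or> (AE x in lborel. 0 < x \<longrightarrow> \<rho> x \<le> \<rho> (- x))"
  shows "AE x in lborel. 0 < x \<longrightarrow> \<rho> x = \<rho> (- x)"
proof -
  define h where "h x = indicator {0<..} x * (x * (\<rho> x - \<rho> (- x)))" for x
  have h: "integrable lborel h" "(LINT x|lborel. h x) = 0"
    using centred_moment_fold[OF \<rho> moment(1), of 0] moment(2) unfolding h_def[abs_def] by simp_all
  have "AE x in lborel. h x = 0"
    using comparable
  proof
    assume "AE x in lborel. 0 < x \<longrightarrow> \<rho> (- x) \<le> \<rho> x"
    then have "AE x in lborel. 0 \<le> h x"
      by eventually_elim (simp add: h_def indicator_def)
    with h show ?thesis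
      using integral_nonneg_eq_0_iff_AE[of lborel h] by simp
  next
    assume "AE x in lborel. 0 < x \<longrightarrow> \<rho> x \<le> \<rho> (- x)"
    then have "AE x in lborel. 0 \<le> - h x"
      by eventually_elim (auto simp: h_def indicator_def intro!: mult_nonneg_nonpos)
    with h show ?thesis
      using integral_nonneg_eq_0_iff_AE[of lborel "\<lambda>x. - h x"] by simp
  qed
  then show ?thesis
    by eventually_elim (auto simp: h_def indicator_def)
qed

section \<open>Decreasing representatives\<close>

lemma emeasure_mult_eq_0_if_no_reflected_pairs:
  fixes U V :: "real set"
  assumes [measurable]: "U \<in> sets borel" "V \<in> sets borel"
    and no_pairs: "\<And>a. AE x in lborel. \<not> (x \<in> U \<and> 2*a - x \<in> V)"
  shows "emeasure lborel U * emeasure lborel V = 0"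
proof -
  have pairs_null: "(\<integral>\<^sup>+x. indicator U x * indicator V (2*a - x) \<partial>lborel) = (0::ennreal)" for a
    using no_pairs[of a] by (subst nn_integral_0_iff_AE) (auto simp: indicator_def elim!: eventually_mono)
  have reflected_measure: "2 * (\<integral>\<^sup>+a. indicator V (2*a - x) \<partial>lborel) = emeasure lborel V" for x
    using nn_integral_real_affine[of "indicator V" 2 "- x"] by simp
  \<comment> \<open>Fubini: integrating over the centre \<open>a\<close> of the reflection first gives \<open>|U| |V| / 2\<close>.\<close>
  have "0 = (\<integral>\<^sup>+a. (\<integral>\<^sup>+x. indicator U x * indicator V (2*a - x) \<partial>lborel) \<partial>lborel)"
    by (simp add: pairs_null)
  also have "\<dots> = (\<integral>\<^sup>+x. (\<integral>\<^sup>+a. indicator U x * indicator V (2*a - x) \<partial>lborel) \<partial>lborel)"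
    by (rule lborel_pair.Fubini') measurable
  also have "\<dots> = (\<integral>\<^sup>+x. indicator U x * (\<integral>\<^sup>+a. indicator V (2*a - x) \<partial>lborel) \<partial>lborel)"
    by (intro nn_integral_cong nn_integral_cmult) measurable
  finally have "0 = 2 * (\<integral>\<^sup>+x. indicator U x * (\<integral>\<^sup>+a. indicator V (2*a - x) \<partial>lborel) \<partial>lborel)"
    by simp
  also have "\<dots> = (\<integral>\<^sup>+x. indicator U x * emeasure lborel V \<partial>lborel)"
    by (subst nn_integral_cmult[symmetric]) (measurable, metis reflected_measure mult.left_commute)
  also have "\<dots> = emeasure lborel U * emeasure lborel V"
    by (subst nn_integral_multc) auto
  finally show ?thesis
    by simp
qed

lemma superlevel_set_fmeasurable:
  fixes \<rho> :: "real \<Rightarrow> real"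
  assumes [measurable]: "\<rho> \<in> borel_measurable borel"
    and nonneg: "\<forall>x. 0 \<le> \<rho> x" and \<rho>: "integrable lborel \<rho>" and "0 < l"
  shows "{y. 0 < y \<and> l < \<rho> y} \<in> fmeasurable lborel"
    and "measure lborel {y. 0 < y \<and> l < \<rho> y} \<le> (LINT x|lborel. \<rho> x) / l"
proof -
  have "emeasure lborel {x \<in> space lborel. l \<le> \<rho> x} \<le> ennreal (1 / l * (LINT x|lborel. \<rho> x))"
    using \<rho> nonneg \<open>0 < l\<close> by (intro integral_Markov_inequality) auto
  also have "\<dots> < \<infinity>"
    by simp
  finally have Markov: "{x \<in> space lborel. l \<le> \<rho> x} \<in> fmeasurable lborel"
    by (intro fmeasurableI) auto
  then show "{y. 0 < y \<and> l < \<rho> y} \<in> fmeasurable lborel"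
    by (rule fmeasurableI2) auto
  have "measure lborel {y. 0 < y \<and> l < \<rho> y} \<le> measure lborel {x \<in> space lborel. l \<le> \<rho> x}"
    using Markov by (intro measure_mono_fmeasurable) auto
  also have "\<dots> \<le> (LINT x|lborel. \<rho> x) / l"
    using \<rho> nonneg \<open>0 < l\<close> by (intro integral_Markov_inequality_measure[of _ _ UNIV]) auto
  finally show "measure lborel {y. 0 < y \<and> l < \<rho> y} \<le> (LINT x|lborel. \<rho> x) / l" .
qed

lemma measure_outside_interval_eq_measure_gap:
  fixes A :: "real set"
  assumes A: "A \<in> fmeasurable lborel" "A \<subseteq> {0<..}"
  defines "r \<equiv> measure lborel A"
  shows "measure lborel (A - {..r}) = measure lborel ({0<..r} - A)"
proof -
  have r_nonneg: "0 \<le> r"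
    by (simp add: r_def)
  have "measure lborel (A - {..r}) = r - measure lborel (A \<inter> {..r})"
    using measure_Diff[of lborel A "A \<inter> {..r}"] fmeasurableD[OF A(1)] fmeasurableD2[OF A(1)]
    by (simp add: r_def Diff_Int)
  moreover have "{0<..r} - A = {0<..r} - A \<inter> {..r}" "A \<inter> {..r} \<subseteq> {0<..r}"
    using A(2) by auto
  ultimately show ?thesis
    using measure_Diff[of lborel "{0<..r}" "A \<inter> {..r}"] fmeasurableD[OF A(1)] r_nonneg by simp
qed

lemma superlevel_set_AE_eq_interval:
  fixes \<rho> :: "real \<Rightarrow> real"
  assumes [measurable]: "\<rho> \<in> borel_measurable borel"
    and nonneg: "\<forall>x. 0 \<le> \<rho> x" and \<rho>: "integrable lborel \<rho>"
    and reflection_le: "\<forall>a>0. AE x in lborel. a < x \<longrightarrow> \<rho> x \<le> \<rho> (2*a - x)"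
    and "0 < l"
  shows "AE x in lborel. 0 < x \<longrightarrow> (l < \<rho> x \<longleftrightarrow> x < measure lborel {y. 0 < y \<and> l < \<rho> y})"
proof -
  define A where "A = {y. 0 < y \<and> l < \<rho> y}"
  define r where "r = measure lborel A"
  define U where "U = A - {..r}"
  define V where "V = {0<..r} - A"
  have A: "A \<in> fmeasurable lborel"
    unfolding A_def using assms(1-3) \<open>0 < l\<close> by (rule superlevel_set_fmeasurable)
  have [measurable]: "U \<in> sets borel" "V \<in> sets borel"
    unfolding U_def V_def A_def by measurable
  have U_fin: "emeasure lborel U \<noteq> top"
    using fmeasurableD2[OF fmeasurable_Diff[OF A]] by (simp add: U_def)
  have "emeasure lborel V \<le> emeasure lborel {0<..r}"
    by (rule emeasure_mono) (auto simp: V_def)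
  then have V_fin: "emeasure lborel V \<noteq> top"
    by (auto simp: r_def top_unique)
  have "AE x in lborel. \<not> (x \<in> U \<and> 2*a - x \<in> V)" for a
  proof (cases "0 < a")
    case True
    with reflection_le show ?thesis
      by (auto simp: U_def V_def A_def elim!: eventually_mono)
  next
    case False
    then show ?thesis
      by (intro AE_I2) (auto simp: U_def V_def A_def r_def)
  qed
  then have "emeasure lborel U * emeasure lborel V = 0"
    by (intro emeasure_mult_eq_0_if_no_reflected_pairs) measurable
  moreover have "measure lborel U = measure lborel V"
    using measure_outside_interval_eq_measure_gap[OF A] by (auto simp: U_def V_def r_def A_def)
  ultimately have "emeasure lborel U = 0" "emeasure lborel V = 0"
    using emeasure_eq_ennreal_measure[OF U_fin] emeasure_eq_ennreal_measure[OF V_fin] by auto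
  then have "AE x in lborel. x \<notin> U" "AE x in lborel. x \<notin> V"
    by (auto intro!: AE_not_in null_setsI)
  moreover have "AE x in lborel. x \<noteq> r"
    by (rule AE_lborel_singleton)
  ultimately have "AE x in lborel. 0 < x \<longrightarrow> (l < \<rho> x \<longleftrightarrow> x < r)"
    by eventually_elim (auto simp: U_def V_def A_def not_le)
  then show ?thesis
    by (simp add: r_def A_def)
qed

lemma cSup_positive_rationals_below:
  fixes v :: real
  assumes "0 \<le> v"
  shows "Sup (insert 0 {q \<in> \<rat>. 0 < q \<and> q < v}) = v"
proof (rule cSup_eq_non_empty)
  fix y
  assume upper: "\<And>q. q \<in> insert 0 {q \<in> \<rat>. 0 < q \<and> q < v} \<Longrightarrow> q \<le> y"
  show "v \<le> y"
  proof (rule ccontr)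
    assume "\<not> v \<le> y"
    then have "max 0 y < v"
      using upper[of 0] by auto
    then obtain q where "q \<in> \<rat>" "max 0 y < q" "q < v"
      using Rats_dense_in_real by blast
    with upper[of q] show False
      by auto
  qed
qed (use assms in auto)

lemma AE_eq_antimono_if_reflection_le:
  fixes \<rho> :: "real \<Rightarrow> real"
  assumes [measurable]: "\<rho> \<in> borel_measurable borel"
    and nonneg: "\<forall>x. 0 \<le> \<rho> x" and \<rho>: "integrable lborel \<rho>"
    and reflection_le: "\<forall>a>0. AE x in lborel. a < x \<longrightarrow> \<rho> x \<le> \<rho> (2*a - x)"
  shows "\<exists>F. (AE x in lborel. 0 < x \<longrightarrow> \<rho> x = F x)
    \<and> (\<forall>x y. 0 < x \<longrightarrow> x \<le> y \<longrightarrow> F y \<le> F x)"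
proof -
  define R where "R l = measure lborel {y. 0 < y \<and> l < \<rho> y}" for l
  define S where "S x = insert 0 {q \<in> \<rat>. 0 < q \<and> x < R q}" for x
  define F where "F x = Sup (S x)" for x
  have bdd: "bdd_above (S x)" if "0 < x" for x
  proof (rule bdd_aboveI)
    fix q assume "q \<in> S x"
    then consider "q = 0" | "0 < q" "x < R q"
      by (auto simp: S_def)
    then show "q \<le> max 0 ((LINT x|lborel. \<rho> x) / x)"
    proof cases
      case 2
      then have "x < (LINT x|lborel. \<rho> x) / q"
        using superlevel_set_fmeasurable(2)[OF assms(1-3) \<open>0 < q\<close>] by (simp add: R_def)
      with 2 \<open>0 < x\<close> have "q < (LINT x|lborel. \<rho> x) / x"
        by (simp add: field_simps mult.commute)
      then show ?thesis
        by simp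
    qed simp
  qed
  have "F y \<le> F x" if "0 < x" "x \<le> y" for x y
    unfolding F_def using bdd[OF that(1)] that by (intro cSup_subset_mono) (auto simp: S_def)
  moreover have "AE x in lborel. \<forall>q\<in>\<rat>. 0 < q \<longrightarrow> 0 < x \<longrightarrow> (q < \<rho> x \<longleftrightarrow> x < R q)"
    using superlevel_set_AE_eq_interval[OF assms]
    by (subst AE_ball_countable) (auto simp: R_def countable_rat)
  then have "AE x in lborel. 0 < x \<longrightarrow> \<rho> x = F x"
  proof eventually_elim
    case (elim x)
    then have "0 < x \<Longrightarrow> S x = insert 0 {q \<in> \<rat>. 0 < q \<and> q < \<rho> x}"
      by (auto simp: S_def)
    then show ?case
      using cSup_positive_rationals_below[OF nonneg[rule_format, of x]] by (simp add: F_def)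
  qed
  ultimately show ?thesis
    by blast
qed

lemma AE_eq_comp_abs_if_even:
  fixes \<rho> F :: "real \<Rightarrow> real"
  assumes pos: "AE x in lborel. 0 < x \<longrightarrow> \<rho> x = F x"
    and even: "AE x in lborel. 0 < x \<longrightarrow> \<rho> x = \<rho> (- x)"
  shows "AE x in lborel. \<rho> x = F \<bar>x\<bar>"
  using pos AE_lborel_reflect[OF pos] AE_lborel_reflect[OF even] AE_lborel_singleton[of 0]
  by eventually_elim (auto simp: abs_if)

theorem proposition4p3:
  fixes \<epsilon> :: real and G G' G'' g g' g'' \<rho> :: "real \<Rightarrow> real"
  assumes eps: "\<epsilon> > 0"
    and G_nonneg: "\<forall>x. 0 \<le> G x"
    and G_supp: "closure {x. G x \<noteq> 0} = UNIV"
    and G_deriv: "\<forall>x. (G has_real_derivative G' x) (at x)"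
    and G_deriv2: "\<forall>x. (G' has_real_derivative G'' x) (at x)"
    and G''_cont: "continuous_on UNIV G''"
    and G_int: "integrable lborel G"
    and G'_int: "integrable lborel G'"
    and G_bdd: "bounded (range G)"
    and G_radial: "\<forall>x. G x = g \<bar>x\<bar>"
    and g_deriv: "\<forall>r\<ge>0. (g has_real_derivative g' r) (at r within {0..})"
    and g_deriv2: "\<forall>r\<ge>0. (g' has_real_derivative g'' r) (at r within {0..})"
    and g'_neg: "\<forall>r>0. g' r < 0"
    and g''0: "g'' 0 < 0"
    and g_lim: "(g \<longlongrightarrow> 0) at_top"
    and G_mass: "(LINT x|lborel. G x) = 1"
    and rho_adm: "admissible \<rho>"
    and rho_min: "\<forall>\<sigma>. admissible \<sigma> \<longrightarrow> energy \<epsilon> G \<rho> \<le> energy \<epsilon> G \<sigma>"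
  shows "\<exists>f. (AE x in lborel. \<rho> x = f x) \<and> (\<forall>x. f (- x) = f x)
            \<and> (\<forall>x y. 0 < x \<longrightarrow> x \<le> y \<longrightarrow> f y \<le> f x)"
proof -
  have "continuous_on UNIV G"
    using G_deriv by (intro continuous_at_imp_continuous_on) (blast intro: DERIV_isCont)
  then have G_measurable[measurable]: "G \<in> borel_measurable borel"
    by (rule borel_measurable_continuous_onI)
  obtain M where G_bound: "\<forall>x. \<bar>G x\<bar> \<le> M"
    using G_bdd by (auto simp: bounded_iff)
  have G_even: "\<forall>x. G (- x) = G x"
    using G_radial by simp
  have G_decreasing: "\<forall>s t. \<bar>s\<bar> < \<bar>t\<bar> \<longrightarrow> G t < G s"
    using radial_less_if_abs_less[OF G_radial g_deriv g'_neg] by blast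
  have \<rho>_measurable[measurable]: "\<rho> \<in> borel_measurable borel" and nonneg: "\<forall>x. 0 \<le> \<rho> x"
    and \<rho>: "integrable lborel \<rho>" "(LINT x|lborel. \<rho> x) = 1"
    and moment: "integrable lborel (\<lambda>x. x * \<rho> x)" "(LINT x|lborel. x * \<rho> x) = 0"
    using rho_adm by (simp_all add: admissible_def L2_def prob_density_def)
  have comparable: "(AE x in lborel. a < x \<longrightarrow> \<rho> (2*a - x) \<le> \<rho> x)
      \<or> (AE x in lborel. a < x \<longrightarrow> \<rho> x \<le> \<rho> (2*a - x))" for a
    by (rule polarization_comparable_if_interaction_le[OF G_measurable \<rho>_measurable G_bound \<rho>(1)
        G_even G_decreasing interaction_polarization_le_if_minimizer[OF rho_adm rho_min]])
  have "\<forall>a>0. AE x in lborel. a < x \<longrightarrow> \<rho> x \<le> \<rho> (2*a - x)"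
    using reflection_le_if_centred[OF \<rho> moment comparable] by blast
  then obtain F where F: "AE x in lborel. 0 < x \<longrightarrow> \<rho> x = F x"
      "\<forall>x y. 0 < x \<longrightarrow> x \<le> y \<longrightarrow> F y \<le> F x"
    using AE_eq_antimono_if_reflection_le[OF \<rho>_measurable nonneg \<rho>(1)] by blast
  have "AE x in lborel. 0 < x \<longrightarrow> \<rho> x = \<rho> (- x)"
    using even_if_centred[OF \<rho>(1) moment] comparable[of 0] by simp
  with F have "AE x in lborel. \<rho> x = F \<bar>x\<bar>"
    by (intro AE_eq_comp_abs_if_even)
  with F(2) show ?thesis
    by (intro exI[of _ "\<lambda>x. F \<bar>x\<bar>"]) auto
qed

end
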